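(* Let $R$ be a ring with identity and involution $*$, and let $a,b\in R$ be core invertible with core inverses $a^{\oplus}$ and $b^{\oplus}$. If $ab=0=ba$ and $a^*b=0$, then $a+b$ is core invertible and $(a+b)^{\oplus}=a^{\oplus}+b^{\oplus}$.
   Context: An involution on $R$ satisfies $(a^* )^*=a$, $(ab)^*=b^*a^*$, $(a+b)^*=a^*+b^*$. An element $x\in R$ is a core inverse of $a$ if $axa=a$, $xR=aR$ and $Rx=Ra^*$; it is unique when it exists and is denoted $a^{\oplus}$. *)

theory Defs
  imports Main
begin

definition involution :: "('a::ring_1 \<Rightarrow> 'a) \<Rightarrow> bool" where
  "involution s \<longleftrightarrow> (\<forall>a. s (s a) = a) \<and> (\<forall>a b. s (a * b) = s b * s a)
     \<and> (\<forall>a b. s (a + b) = s a + s b)"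

definition right_ideal :: "'a::ring_1 \<Rightarrow> 'a set" where
  "right_ideal x = {x * r | r. True}"

definition left_ideal :: "'a::ring_1 \<Rightarrow> 'a set" where
  "left_ideal x = {r * x | r. True}"

definition is_core_inverse :: "('a::ring_1 \<Rightarrow> 'a) \<Rightarrow> 'a \<Rightarrow> 'a \<Rightarrow> bool" where
  "is_core_inverse s a x \<longleftrightarrow> a * x * a = a \<and> right_ideal x = right_ideal a
     \<and> left_ideal x = left_ideal (s a)"

definition core_invertible :: "('a::ring_1 \<Rightarrow> 'a) \<Rightarrow> 'a \<Rightarrow> bool" where
  "core_invertible s a \<longleftrightarrow> (\<exists>x. is_core_inverse s a x)"

text \<open>The core inverse (unique when it exists).\<close>
definition core_inv :: "('a::ring_1 \<Rightarrow> 'a) \<Rightarrow> 'a \<Rightarrow> 'a" where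
  "core_inv s a = (THE x. is_core_inverse s a x)"

end

theory Submission
  imports Defs
begin

text \<open>
  Writing \<open>x = a\<^sup>\<oplus>\<close> and \<open>y = b\<^sup>\<oplus>\<close>, one has \<open>x \<in> aR \<inter> Ra\<^sup>*\<close> and \<open>y \<in> bR \<inter> Rb\<^sup>*\<close>, so the
  orthogonality hypotheses make all mixed products \<open>xb, bx, ay, ya\<close> vanish.  The candidate
  \<open>x + y\<close> then satisfies \<open>(a+b)(x+y)(a+b) = a+b\<close>, and the identities \<open>x = ax\<^sup>2\<close>,
  \<open>a = xa\<^sup>2\<close>, \<open>x = xx\<^sup>*a\<^sup>*\<close>, \<open>a\<^sup>* = a\<^sup>*ax\<close> (and those for \<open>b, y\<close>) add up to the
  factorizations showing \<open>(x+y)R = (a+b)R\<close> and \<open>R(x+y) = R(a+b)\<^sup>*\<close>.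
\<close>

lemma involution_invol: "involution s \<Longrightarrow> s (s a) = a"
  and involution_mult: "involution s \<Longrightarrow> s (a * b) = s b * s a"
  and involution_add: "involution s \<Longrightarrow> s (a + b) = s a + s b"
  by (simp_all add: involution_def)

lemma involution_zero:
  assumes "involution s"
  shows "s 0 = 0"
proof -
  have "s (0 + 0) = s 0 + s 0" using assms by (rule involution_add)
  then show ?thesis by simp
qed

lemma right_ideal_eq_iff:
  "right_ideal x = right_ideal y \<longleftrightarrow> (\<exists>p. x = y * p) \<and> (\<exists>q. y = x * q)"
proof
  assume eq: "right_ideal x = right_ideal y"
  have "x \<in> right_ideal y" "y \<in> right_ideal x"
    using eq unfolding right_ideal_def by (metis (mono_tags) mem_Collect_eq mult_1_right)+
  then show "(\<exists>p. x = y * p) \<and> (\<exists>q. y = x * q)"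
    by (auto simp: right_ideal_def)
next
  assume "(\<exists>p. x = y * p) \<and> (\<exists>q. y = x * q)"
  then obtain p q where "x = y * p" "y = x * q" by blast
  then show "right_ideal x = right_ideal y"
    unfolding right_ideal_def by (metis mult.assoc)
qed

lemma left_ideal_eq_iff:
  "left_ideal x = left_ideal y \<longleftrightarrow> (\<exists>p. x = p * y) \<and> (\<exists>q. y = q * x)"
proof
  assume eq: "left_ideal x = left_ideal y"
  have "x \<in> left_ideal y" "y \<in> left_ideal x"
    using eq unfolding left_ideal_def by (metis (mono_tags) mem_Collect_eq mult_1_left)+
  then show "(\<exists>p. x = p * y) \<and> (\<exists>q. y = q * x)"
    by (auto simp: left_ideal_def)
next
  assume "(\<exists>p. x = p * y) \<and> (\<exists>q. y = q * x)"
  then obtain p q where "x = p * y" "y = q * x" by blast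
  then show "left_ideal x = left_ideal y"
    unfolding left_ideal_def by (metis mult.assoc)
qed

lemma is_core_inverse_iff:
  "is_core_inverse s a x \<longleftrightarrow>
     a * x * a = a \<and> (\<exists>p. x = a * p) \<and> (\<exists>q. a = x * q) \<and> (\<exists>p. x = p * s a) \<and> (\<exists>q. s a = q * x)"
  by (simp add: is_core_inverse_def right_ideal_eq_iff left_ideal_eq_iff)

lemma core_inverse_star_factor:
  assumes inv: "involution s" and c: "is_core_inverse s a x"
  shows "x = x * s x * s a"
proof -
  obtain w where w: "x = w * s a" using c unfolding is_core_inverse_iff by blast
  have "s a = s (a * x * a)" using c by (simp add: is_core_inverse_iff)
  also have "\<dots> = s a * s x * s a" using inv by (simp add: involution_mult mult.assoc)
  finally have "x = w * (s a * s x * s a)" using w by simp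
  also have "\<dots> = x * s x * s a" using w by (simp add: mult.assoc)
  finally show ?thesis .
qed

lemma core_inverse_hermitian:
  assumes inv: "involution s" and c: "is_core_inverse s a x"
  shows "s (a * x) = a * x"
proof -
  have ax: "a * x = (a * x) * s (a * x)"
  proof -
    have "a * x = a * (x * s x * s a)" using core_inverse_star_factor[OF inv c] by simp
    also have "\<dots> = (a * x) * s (a * x)" using inv by (simp add: involution_mult mult.assoc)
    finally show ?thesis .
  qed
  have "s (a * x) = s ((a * x) * s (a * x))" using ax by simp
  also have "\<dots> = (a * x) * s (a * x)" using inv by (simp add: involution_mult involution_invol mult.assoc)
  finally show ?thesis using ax by simp
qed

lemma core_inverse_star_absorb:
  assumes inv: "involution s" and c: "is_core_inverse s a x"
  shows "s a * a * x = s a"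
proof -
  have "s a * a * x = s a * s (a * x)"
    using core_inverse_hermitian[OF inv c] by (simp add: mult.assoc)
  also have "\<dots> = s (a * x * a)" using inv by (simp add: involution_mult mult.assoc)
  finally show ?thesis using c by (simp add: is_core_inverse_iff)
qed

lemma core_inverse_outer:
  assumes inv: "involution s" and c: "is_core_inverse s a x"
  shows "x * a * x = x"
proof -
  obtain w where w: "x = w * s a" using c unfolding is_core_inverse_iff by blast
  then have "x * a * x = w * (s a * a * x)" by (simp add: mult.assoc)
  then show ?thesis using core_inverse_star_absorb[OF inv c] w by simp
qed

lemma core_inverse_mult_square:
  assumes inv: "involution s" and c: "is_core_inverse s a x"
  shows "x * (a * a) = a"
proof -
  obtain v where v: "a = x * v" using c unfolding is_core_inverse_iff by blast
  then have "x * (a * a) = x * a * x * v" by (simp add: mult.assoc)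
  then show ?thesis using core_inverse_outer[OF inv c] v by simp
qed

lemma core_inverse_square:
  assumes c: "is_core_inverse s a x"
  shows "a * (x * x) = x"
proof -
  obtain u where u: "x = a * u" using c unfolding is_core_inverse_iff by blast
  then have "a * (x * x) = a * x * a * u" by (simp add: mult.assoc)
  then show ?thesis using c u by (simp add: is_core_inverse_iff)
qed

lemma core_inverse_unique:
  assumes inv: "involution s" and c1: "is_core_inverse s a x1" and c2: "is_core_inverse s a x2"
  shows "x1 = x2"
proof -
  have h1: "s (a * x1) = a * x1" and h2: "s (a * x2) = a * x2"
    using core_inverse_hermitian inv c1 c2 by blast+
  have "a * x1 = (a * x2 * a) * x1" using c2 by (simp add: is_core_inverse_iff)
  also have "\<dots> = s (a * x2) * s (a * x1)" using h1 h2 by (simp add: mult.assoc)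
  also have "\<dots> = s (a * x1 * (a * x2))" using inv by (simp add: involution_mult)
  also have "\<dots> = a * x2" using c1 h2 by (simp add: is_core_inverse_iff mult.assoc[symmetric])
  finally have e: "a * x1 = a * x2" .
  obtain u where u: "x2 = a * u" using c2 unfolding is_core_inverse_iff by blast
  have "x1 = x1 * (a * x1)" using core_inverse_outer[OF inv c1] by (simp add: mult.assoc)
  also have "\<dots> = x1 * (a * a) * u" using e u by (simp add: mult.assoc)
  also have "\<dots> = x2" using core_inverse_mult_square[OF inv c1] u by simp
  finally show ?thesis .
qed

lemma core_inv_eq:
  assumes "involution s" and "is_core_inverse s a x"
  shows "core_inv s a = x"
  unfolding core_inv_def using assms core_inverse_unique by blast

lemma core_inverse_add:
  assumes inv: "involution s"
    and cx: "is_core_inverse s a x" and cy: "is_core_inverse s b y"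
    and ab: "a * b = 0" and ba: "b * a = 0" and sab: "s a * b = 0"
  shows "is_core_inverse s (a + b) (x + y)"
proof -
  have "s b * a = s (s a * b)" using inv by (simp add: involution_mult involution_invol)
  then have sba: "s b * a = 0" using inv sab by (simp add: involution_zero)
  obtain u w where u: "x = a * u" and w: "x = w * s a" using cx unfolding is_core_inverse_iff by blast
  obtain u' w' where u': "y = b * u'" and w': "y = w' * s b" using cy unfolding is_core_inverse_iff by blast
  have xb: "x * b = 0" using w sab by (simp add: mult.assoc)
  have bx: "b * x = 0" using u ba by (simp add: mult.assoc[symmetric])
  have ay: "a * y = 0" using u' ab by (simp add: mult.assoc[symmetric])
  have ya: "y * a = 0" using w' sba by (simp add: mult.assoc)
  have sxsb: "s x * s b = 0" using inv bx by (simp flip: involution_mult add: involution_zero)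
  have sysa: "s y * s a = 0" using inv ay by (simp flip: involution_mult add: involution_zero)
  have ay': "a * (y * z) = 0" and bx': "b * (x * z) = 0"
    and xb': "x * (b * z) = 0" and ya': "y * (a * z) = 0" for z
    using ay bx xb ya by (simp_all flip: mult.assoc)
  have "(a + b) * (x + y) * (a + b) = a * x * a + b * y * b"
    using ay' bx' xb ya by (simp add: algebra_simps)
  then have inner: "(a + b) * (x + y) * (a + b) = a + b"
    using cx cy by (simp add: is_core_inverse_iff)
  have "(a + b) * (x * x + y * y) = a * (x * x) + b * (y * y)"
    using ay' bx' by (simp add: algebra_simps)
  then have f1: "x + y = (a + b) * (x * x + y * y)"
    using core_inverse_square[OF cx] core_inverse_square[OF cy] by simp
  have "(x + y) * (a * a + b * b) = x * (a * a) + y * (b * b)"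
    using xb' ya' by (simp add: algebra_simps)
  then have f2: "a + b = (x + y) * (a * a + b * b)"
    using core_inverse_mult_square[OF inv cx] core_inverse_mult_square[OF inv cy] by simp
  have "(x * s x + y * s y) * s (a + b) = x * s x * s a + y * s y * s b"
    using inv sxsb sysa by (simp add: involution_add algebra_simps)
  then have f3: "x + y = (x * s x + y * s y) * s (a + b)"
    using core_inverse_star_factor[OF inv cx] core_inverse_star_factor[OF inv cy] by simp
  have "(s a * a + s b * b) * (x + y) = s a * a * x + s b * b * y"
    using ay bx by (simp add: algebra_simps)
  then have f4: "s (a + b) = (s a * a + s b * b) * (x + y)"
    using inv core_inverse_star_absorb[OF inv cx] core_inverse_star_absorb[OF inv cy]
    by (simp add: involution_add)
  show ?thesis
    unfolding is_core_inverse_iff using inner f1 f2 f3 f4 by blast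
qed

theorem corollary4p7:
  fixes s :: "'a::ring_1 \<Rightarrow> 'a" and a b :: 'a
  assumes "involution s"
    and "core_invertible s a" and "core_invertible s b"
    and "a * b = 0" and "b * a = 0" and "s a * b = 0"
  shows "core_invertible s (a + b) \<and> core_inv s (a + b) = core_inv s a + core_inv s b"
proof -
  obtain x where cx: "is_core_inverse s a x" using assms(2) by (auto simp: core_invertible_def)
  obtain y where cy: "is_core_inverse s b y" using assms(3) by (auto simp: core_invertible_def)
  have c: "is_core_inverse s (a + b) (x + y)"
    using core_inverse_add[OF assms(1) cx cy assms(4-6)] .
  then show ?thesis
    using core_inv_eq[OF assms(1)] cx cy by (auto simp: core_invertible_def)
qed

end
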